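(* Let $\mathbb{K}$ be an algebraically closed field of characteristic zero and $Y$ an irreducible affine variety. If the ideal $I\subseteq\mathbb{K}[Y]$ generated by the images $\partial(\mathbb{K}[Y])$ of all locally nilpotent derivations $\partial$ of $\mathbb{K}[Y]$ equals $\mathbb{K}[Y]$, then $Y$ is of type A, i.e. $\mathrm{HD}^*(Y\times\mathbb{A}^1)=\mathbb{K}[Y\times\mathbb{A}^1]$.
   Context: A derivation is locally nilpotent (LND) if every element is killed by some power of it. A slice of an LND $\partial$ is an element $s$ with $\partial(s)=1$. For an affine variety $X$, $\mathrm{HD}^*(X)$ is the $\mathbb{K}$-subalgebra of $\mathbb{K}[X]$ generated by the kernels of all LNDs of $\mathbb{K}[X]$ that have a slice. *)

theory Defs
  imports "HOL-Computational_Algebra.Polynomial"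
begin

definition alg_closed :: "('k::field) itself \<Rightarrow> bool" where
  "alg_closed _ \<longleftrightarrow> (\<forall>p :: 'k poly. degree p > 0 \<longrightarrow> (\<exists>x. poly p x = 0))"

definition alg_map :: "('k::field \<Rightarrow> 'b::comm_ring_1) \<Rightarrow> bool" where
  "alg_map \<iota> \<longleftrightarrow> \<iota> 1 = 1 \<and> (\<forall>a b. \<iota> (a + b) = \<iota> a + \<iota> b) \<and> (\<forall>a b. \<iota> (a * b) = \<iota> a * \<iota> b)"

inductive_set subalg :: "('k \<Rightarrow> 'b::comm_ring_1) \<Rightarrow> 'b set \<Rightarrow> 'b set"
  for \<iota> :: "'k \<Rightarrow> 'b" and S :: "'b set" where
  scalar: "\<iota> c \<in> subalg \<iota> S"
| gen: "s \<in> S \<Longrightarrow> s \<in> subalg \<iota> S"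
| add: "x \<in> subalg \<iota> S \<Longrightarrow> y \<in> subalg \<iota> S \<Longrightarrow> x + y \<in> subalg \<iota> S"
| mult: "x \<in> subalg \<iota> S \<Longrightarrow> y \<in> subalg \<iota> S \<Longrightarrow> x * y \<in> subalg \<iota> S"

definition finitely_generated_alg :: "('k \<Rightarrow> 'b::comm_ring_1) \<Rightarrow> bool" where
  "finitely_generated_alg \<iota> \<longleftrightarrow> (\<exists>S. finite S \<and> subalg \<iota> S = UNIV)"

inductive_set ideal_gen :: "'b::comm_ring_1 set \<Rightarrow> 'b set" for T :: "'b set" where
  zero: "0 \<in> ideal_gen T"
| gen: "t \<in> T \<Longrightarrow> r * t \<in> ideal_gen T"
| add: "x \<in> ideal_gen T \<Longrightarrow> y \<in> ideal_gen T \<Longrightarrow> x + y \<in> ideal_gen T"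

definition is_derivation :: "('k \<Rightarrow> 'b::comm_ring_1) \<Rightarrow> ('b \<Rightarrow> 'b) \<Rightarrow> bool" where
  "is_derivation \<iota> D \<longleftrightarrow>
     (\<forall>x y. D (x + y) = D x + D y) \<and>
     (\<forall>c x. D (\<iota> c * x) = \<iota> c * D x) \<and>
     (\<forall>x y. D (x * y) = x * D y + y * D x)"

definition is_LND :: "('k \<Rightarrow> 'b::comm_ring_1) \<Rightarrow> ('b \<Rightarrow> 'b) \<Rightarrow> bool" where
  "is_LND \<iota> D \<longleftrightarrow> is_derivation \<iota> D \<and> (\<forall>x. \<exists>n. (D ^^ n) x = 0)"

definition has_slice :: "('b::comm_ring_1 \<Rightarrow> 'b) \<Rightarrow> bool" where
  "has_slice D \<longleftrightarrow> (\<exists>s. D s = 1)"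

definition HD_star :: "('k \<Rightarrow> 'b::comm_ring_1) \<Rightarrow> 'b set" where
  "HD_star \<iota> = subalg \<iota> (\<Union>{{x. D x = 0} | D. is_LND \<iota> D \<and> has_slice D})"

definition LND_image_ideal :: "('k \<Rightarrow> 'b::comm_ring_1) \<Rightarrow> 'b set" where
  "LND_image_ideal \<iota> = ideal_gen (\<Union>{range D | D. is_LND \<iota> D})"

end

theory Submission
  imports Defs
begin

text \<open>
  For an LND \<open>\<partial>\<close> of \<open>B\<close>, the derivation \<open>D = \<partial> + d/dx\<close> of \<open>B[x]\<close> is locally nilpotent
  with slice \<open>x\<close>, and \<open>exp(-x\<partial>) b = \<Sum>\<^sub>i (-x)\<^sup>i \<partial>\<^sup>i b / i!\<close> lies in its kernel.
  Doing this for all multiples \<open>t\<partial>\<close> gives a polynomial family in \<open>t\<close> inside \<open>HD\<^sup>*(B[x])\<close>,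
  and extracting its coefficient of \<open>t\<close> shows \<open>x \<partial>b \<in> HD\<^sup>*(B[x])\<close>.
  Since \<open>B = ker d/dx \<subseteq> HD\<^sup>*(B[x])\<close>, we get \<open>x I \<subseteq> HD\<^sup>*(B[x])\<close>, so \<open>I = B\<close> puts \<open>x\<close>
  into \<open>HD\<^sup>*(B[x])\<close>.
\<close>

context
  fixes \<iota> :: "'k::field \<Rightarrow> 'r::comm_ring_1"
  assumes alg: "alg_map \<iota>"
begin

lemma alg_map_add: "\<iota> (a + b) = \<iota> a + \<iota> b"
  using alg unfolding alg_map_def by blast

lemma alg_map_mult: "\<iota> (a * b) = \<iota> a * \<iota> b"
  using alg unfolding alg_map_def by blast

lemma alg_map_1: "\<iota> 1 = 1"
  using alg unfolding alg_map_def by blast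

lemma alg_map_0: "\<iota> 0 = 0"
  using alg_map_add[of 0 0] by simp

lemma alg_map_uminus: "\<iota> (- a) = - \<iota> a"
  using alg_map_add[of "- a" a] by (simp add: alg_map_0 eq_neg_iff_add_eq_0)

lemma alg_map_diff: "\<iota> (a - b) = \<iota> a - \<iota> b"
  using alg_map_add[of a "- b"] by (simp add: alg_map_uminus)

lemma alg_map_power: "\<iota> (a ^ n) = \<iota> a ^ n"
  by (induction n) (simp_all add: alg_map_1 alg_map_mult)

lemma alg_map_of_nat: "\<iota> (of_nat n) = of_nat n"
  by (induction n) (simp_all add: alg_map_0 alg_map_1 alg_map_add)

lemma alg_map_inverse_mult: "a \<noteq> 0 \<Longrightarrow> \<iota> (inverse a) * \<iota> a = 1"
  using alg_map_mult[of "inverse a" a] by (simp add: alg_map_1)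

end

lemma alg_map_const_poly: "alg_map \<iota> \<Longrightarrow> alg_map (\<lambda>c. [:\<iota> c:])"
  unfolding alg_map_def by (simp add: one_pCons)

text \<open>
  Replacing \<open>f(t)\<close> by \<open>f(2t) - 2\<^sup>n f(t)\<close> kills the top coefficient of \<open>f\<close> and multiplies
  the coefficient of \<open>t\<close> by \<open>2 - 2\<^sup>n\<close>, which is invertible in characteristic zero.
\<close>
lemma linear_coeff_mem:
  fixes \<sigma> :: "'k::field_char_0 \<Rightarrow> 'r::comm_ring_1"
  assumes alg: "alg_map \<sigma>"
    and add: "\<And>x y. x \<in> S \<Longrightarrow> y \<in> S \<Longrightarrow> x + y \<in> S"
    and scale: "\<And>c x. x \<in> S \<Longrightarrow> \<sigma> c * x \<in> S"
    and "1 \<le> n" and "\<And>t. (\<Sum>i\<le>n. \<sigma> t ^ i * v i) \<in> S"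
  shows "v 1 \<in> S"
  using assms(4,5)
proof (induction n arbitrary: v rule: nat_induct_at_least)
  case base
  have "(\<Sum>i\<le>1. \<sigma> 1 ^ i * v i) + \<sigma> (- 1) * (\<Sum>i\<le>1. \<sigma> 0 ^ i * v i) \<in> S"
    using base add scale by blast
  then show ?case
    by (simp add: alg_map_0[OF alg] alg_map_1[OF alg] alg_map_uminus[OF alg])
next
  case (Suc n)
  define c :: 'k where "c = 2 ^ Suc n"
  define w where "w i = \<sigma> (2 ^ i - c) * v i" for i
  have "(\<Sum>i\<le>n. \<sigma> t ^ i * w i) \<in> S" for t
  proof -
    have "(\<Sum>i\<le>Suc n. \<sigma> (2 * t) ^ i * v i) + \<sigma> (- c) * (\<Sum>i\<le>Suc n. \<sigma> t ^ i * v i) \<in> S"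
      using Suc.prems add scale by blast
    also have "(\<Sum>i\<le>Suc n. \<sigma> (2 * t) ^ i * v i) + \<sigma> (- c) * (\<Sum>i\<le>Suc n. \<sigma> t ^ i * v i)
        = (\<Sum>i\<le>Suc n. \<sigma> t ^ i * w i)"
      unfolding w_def sum_distrib_left sum.distrib[symmetric]
      by (rule sum.cong)
        (simp_all add: alg_map_mult[OF alg] alg_map_power[OF alg] alg_map_diff[OF alg]
          alg_map_uminus[OF alg] power_mult_distrib algebra_simps)
    also have "\<dots> = (\<Sum>i\<le>n. \<sigma> t ^ i * w i)"
      by (simp add: w_def c_def alg_map_0[OF alg])
    finally show ?thesis .
  qed
  then have "\<sigma> (inverse (2 - c)) * w 1 \<in> S"
    using Suc.IH scale by blast
  moreover have "2 - c \<noteq> 0"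
  proof
    assume "2 - c = 0"
    then have "(of_nat (2 ^ Suc n) :: 'k) = of_nat 2"
      by (simp add: c_def)
    then have "(2::nat) ^ Suc n = 2"
      using of_nat_eq_iff by blast
    moreover have "(2::nat) ^ Suc n \<ge> 2 ^ 2"
      using \<open>1 \<le> n\<close> by (intro power_increasing) auto
    ultimately show False
      by simp
  qed
  ultimately show ?case
    using alg_map_inverse_mult[OF alg, of "2 - c"] unfolding w_def
    by (simp add: mult.assoc[symmetric])
qed

context
  fixes \<iota> :: "'k \<Rightarrow> 'b::comm_ring_1" and \<delta> :: "'b \<Rightarrow> 'b"
  assumes der: "is_derivation \<iota> \<delta>"
begin

lemma derivation_add: "\<delta> (x + y) = \<delta> x + \<delta> y"
  using der unfolding is_derivation_def by blast

lemma derivation_scale: "\<delta> (\<iota> c * x) = \<iota> c * \<delta> x"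
  using der unfolding is_derivation_def by blast

lemma derivation_mult: "\<delta> (x * y) = x * \<delta> y + y * \<delta> x"
  using der unfolding is_derivation_def by blast

lemma derivation_0: "\<delta> 0 = 0"
  using derivation_add[of 0 0] by simp

lemma derivation_1: "\<delta> 1 = 0"
  using derivation_mult[of 1 1] by simp

lemma derivation_sum: "\<delta> (sum f A) = (\<Sum>a\<in>A. \<delta> (f a))"
  using sum_comp_morphism[of \<delta> f A, OF derivation_0 derivation_add] by (simp add: comp_def)

lemma derivation_of_nat_mult: "\<delta> (of_nat m * x) = of_nat m * \<delta> x"
  by (induction m) (simp_all add: derivation_0 derivation_add algebra_simps)

lemma funpow_derivation_0: "(\<delta> ^^ n) 0 = 0"
  by (induction n) (simp_all add: derivation_0)

lemma funpow_derivation_add: "(\<delta> ^^ n) (x + y) = (\<delta> ^^ n) x + (\<delta> ^^ n) y"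
  by (induction n) (simp_all add: derivation_add)

lemma funpow_derivation_of_nat_mult: "(\<delta> ^^ n) (of_nat m * x) = of_nat m * (\<delta> ^^ n) x"
  by (induction n) (simp_all add: derivation_of_nat_mult)

lemma funpow_derivation_eq_0_mono:
  assumes "(\<delta> ^^ n) x = 0" and "n \<le> m"
  shows "(\<delta> ^^ m) x = 0"
proof -
  have "(\<delta> ^^ m) x = (\<delta> ^^ (m - n)) ((\<delta> ^^ n) x)"
    using \<open>n \<le> m\<close> by (metis funpow_add le_add_diff_inverse2 o_apply)
  then show ?thesis
    using assms(1) by (simp add: funpow_derivation_0)
qed

end

definition extend_der :: "('b::idom \<Rightarrow> 'b) \<Rightarrow> 'b poly \<Rightarrow> 'b poly" where
  "extend_der \<delta> p = pderiv p + map_poly \<delta> p"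

context
  fixes \<iota> :: "'k \<Rightarrow> 'b::idom" and \<delta> :: "'b \<Rightarrow> 'b"
  assumes der: "is_derivation \<iota> \<delta>"
begin

lemma coeff_extend_der:
  "coeff (extend_der \<delta> p) i = of_nat (Suc i) * coeff p (Suc i) + \<delta> (coeff p i)"
  by (simp add: extend_der_def coeff_pderiv coeff_map_poly derivation_0[OF der])

lemma extend_der_derivation: "is_derivation (\<lambda>c. [:\<iota> c:]) (extend_der \<delta>)"
  unfolding is_derivation_def
proof (intro conjI allI)
  fix x y :: "'b poly"
  show "extend_der \<delta> (x + y) = extend_der \<delta> x + extend_der \<delta> y"
    by (rule poly_eqI) (simp add: coeff_extend_der derivation_add[OF der] algebra_simps)
  have "map_poly \<delta> (x * y) = x * map_poly \<delta> y + y * map_poly \<delta> x"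
  proof (rule poly_eqI)
    fix n
    have "\<delta> (coeff (x * y) n) = coeff (x * map_poly \<delta> y) n + coeff (map_poly \<delta> x * y) n"
      unfolding coeff_mult
      by (simp add: coeff_map_poly derivation_0[OF der] derivation_sum[OF der]
          derivation_mult[OF der] sum.distrib mult.commute)
    then show "coeff (map_poly \<delta> (x * y)) n = coeff (x * map_poly \<delta> y + y * map_poly \<delta> x) n"
      by (simp add: coeff_map_poly derivation_0[OF der] mult.commute)
  qed
  then show "extend_der \<delta> (x * y) = x * extend_der \<delta> y + y * extend_der \<delta> x"
    by (simp add: extend_der_def pderiv_mult algebra_simps)
next
  fix c and x :: "'b poly"
  show "extend_der \<delta> ([:\<iota> c:] * x) = [:\<iota> c:] * extend_der \<delta> x"
    by (rule poly_eqI) (simp add: coeff_extend_der derivation_scale[OF der] algebra_simps)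
qed

lemma extend_der_X: "extend_der \<delta> [:0, 1:] = 1"
  by (rule poly_eqI)
    (simp add: coeff_extend_der derivation_0[OF der] derivation_1[OF der] coeff_pCons
      split: nat.split)

text \<open>Local nilpotency of \<open>\<partial> + d/dx\<close>: both summands lower by one the bound \<open>r\<close> on
  the weight \<open>i + (\<partial>-nilpotency order of coeff p i)\<close>.\<close>
lemma extend_der_weight_step:
  assumes "\<forall>i. (\<delta> ^^ (Suc r - i)) (coeff p i) = 0"
  shows "\<forall>i. (\<delta> ^^ (r - i)) (coeff (extend_der \<delta> p) i) = 0"
proof
  fix i
  have "(\<delta> ^^ (r - i)) (coeff p (Suc i)) = 0"
    using assms[rule_format, of "Suc i"] by simp
  moreover have "(\<delta> ^^ (r - i)) (\<delta> (coeff p i)) = 0"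
  proof (cases "i \<le> r")
    case True
    then have "Suc r - i = Suc (r - i)" by simp
    then show ?thesis
      using assms[rule_format, of i] by (simp add: funpow_Suc_right del: funpow.simps)
  next
    case False
    then have "coeff p i = 0"
      using assms[rule_format, of i] by simp
    then show ?thesis
      by (simp add: derivation_0[OF der] funpow_derivation_0[OF der])
  qed
  ultimately show "(\<delta> ^^ (r - i)) (coeff (extend_der \<delta> p) i) = 0"
    by (simp add: coeff_extend_der funpow_derivation_add[OF der]
        funpow_derivation_of_nat_mult[OF der] del: of_nat_Suc)
qed

lemma funpow_extend_der_eq_0:
  "\<forall>i. (\<delta> ^^ (r - i)) (coeff p i) = 0 \<Longrightarrow> (extend_der \<delta> ^^ r) p = 0"
proof (induction r arbitrary: p)
  case 0
  then show ?case by (simp add: poly_eqI)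
next
  case (Suc r)
  then have "(extend_der \<delta> ^^ r) (extend_der \<delta> p) = 0"
    using extend_der_weight_step by blast
  then show ?case
    by (simp add: funpow_Suc_right del: funpow.simps)
qed

end

lemma extend_der_LND:
  fixes \<iota> :: "'k \<Rightarrow> 'b::idom"
  assumes lnd: "is_LND \<iota> \<delta>"
  shows "is_LND (\<lambda>c. [:\<iota> c:]) (extend_der \<delta>)"
  unfolding is_LND_def
proof (intro conjI allI)
  have der: "is_derivation \<iota> \<delta>"
    using lnd unfolding is_LND_def by blast
  then show "is_derivation (\<lambda>c. [:\<iota> c:]) (extend_der \<delta>)"
    by (rule extend_der_derivation)
  fix p :: "'b poly"
  have "\<forall>i. \<exists>n. (\<delta> ^^ n) (coeff p i) = 0"
    using lnd unfolding is_LND_def by blast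
  then obtain f where f: "\<And>i. (\<delta> ^^ f i) (coeff p i) = 0"
    by metis
  define M where "M = (\<Sum>i\<le>degree p. f i)"
  have "(\<delta> ^^ (degree p + 1 + M - i)) (coeff p i) = 0" for i
  proof (cases "i \<le> degree p")
    case True
    then have "f i \<le> M"
      unfolding M_def by (intro member_le_sum) auto
    then show ?thesis
      using True funpow_derivation_eq_0_mono[OF der f] by simp
  next
    case False
    then show ?thesis
      by (simp add: coeff_eq_0 funpow_derivation_0[OF der])
  qed
  then show "\<exists>n. (extend_der \<delta> ^^ n) p = 0"
    using funpow_extend_der_eq_0[OF der] by blast
qed

lemma funpow_scale_derivation:
  assumes "alg_map \<iota>" and "is_derivation \<iota> \<delta>"
  shows "((\<lambda>y. \<iota> t * \<delta> y) ^^ n) y = \<iota> t ^ n * (\<delta> ^^ n) y"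
  by (induction n)
    (simp_all add: derivation_scale[OF assms(2), of "t ^ _", unfolded alg_map_power[OF assms(1)]])

lemma is_LND_scale:
  assumes alg: "alg_map \<iota>" and lnd: "is_LND \<iota> \<delta>"
  shows "is_LND \<iota> (\<lambda>y. \<iota> t * \<delta> y)"
proof -
  have der: "is_derivation \<iota> \<delta>"
    using lnd unfolding is_LND_def by blast
  have "is_derivation \<iota> (\<lambda>y. \<iota> t * \<delta> y)"
    unfolding is_derivation_def derivation_scale[OF der]
    by (simp add: derivation_add[OF der] derivation_mult[OF der] algebra_simps)
  moreover have "\<exists>n. ((\<lambda>y. \<iota> t * \<delta> y) ^^ n) x = 0" for x
    using lnd unfolding is_LND_def funpow_scale_derivation[OF alg der] by (metis mult_zero_right)
  ultimately show ?thesis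
    unfolding is_LND_def by blast
qed

definition exp_series :: "('k::field_char_0 \<Rightarrow> 'b::comm_ring_1) \<Rightarrow> ('b \<Rightarrow> 'b) \<Rightarrow> 'b \<Rightarrow> nat \<Rightarrow> 'b poly"
  where "exp_series \<iota> \<delta> b n = (\<Sum>i\<le>n. monom (\<iota> ((-1) ^ i / fact i) * (\<delta> ^^ i) b) i)"

lemma coeff_exp_series:
  "coeff (exp_series \<iota> \<delta> b n) j = (if j \<le> n then \<iota> ((-1) ^ j / fact j) * (\<delta> ^^ j) b else 0)"
  by (simp add: exp_series_def coeff_sum coeff_monom)

lemma extend_der_exp_series:
  fixes \<iota> :: "'k::field_char_0 \<Rightarrow> 'b::idom"
  assumes alg: "alg_map \<iota>" and der: "is_derivation \<iota> \<delta>" and "(\<delta> ^^ Suc n) b = 0"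
  shows "extend_der \<delta> (exp_series \<iota> \<delta> b n) = 0"
proof (rule poly_eqI)
  fix j
  let ?c = "\<lambda>j. \<iota> ((-1) ^ j / fact j)"
  have "(of_nat (Suc j) :: 'k) * ((-1) ^ Suc j / fact (Suc j)) = - ((-1) ^ j / fact j)"
    unfolding fact_Suc by (simp del: of_nat_Suc)
  then have shift: "of_nat (Suc j) * ?c (Suc j) = - ?c j"
    by (metis alg_map_mult[OF alg] alg_map_of_nat[OF alg] alg_map_uminus[OF alg])
  have step: "\<delta> (?c j * (\<delta> ^^ j) b) = ?c j * (\<delta> ^^ Suc j) b"
    by (simp add: derivation_scale[OF der])
  consider "j < n" | "j = n" | "n < j"
    by linarith
  then show "coeff (extend_der \<delta> (exp_series \<iota> \<delta> b n)) j = coeff 0 j"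
    using shift step \<open>(\<delta> ^^ Suc n) b = 0\<close>
    by cases (simp_all add: coeff_extend_der[OF der] coeff_exp_series derivation_0[OF der]
        mult.assoc[symmetric] del: of_nat_Suc funpow.simps)
qed

lemma extend_der_kernel_in_HD_star:
  assumes "is_LND \<iota> \<delta>" and "extend_der \<delta> p = 0"
  shows "p \<in> HD_star (\<lambda>c. [:\<iota> c:])"
proof -
  have "has_slice (extend_der \<delta>)"
    unfolding has_slice_def
    using extend_der_X assms(1) unfolding is_LND_def by blast
  then show ?thesis
    unfolding HD_star_def using assms extend_der_LND by (intro subalg.gen) blast
qed

lemma const_poly_in_HD_star:
  fixes \<iota> :: "'k \<Rightarrow> 'b::idom"
  shows "[:r:] \<in> HD_star (\<lambda>c. [:\<iota> c:])"
proof (rule extend_der_kernel_in_HD_star)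
  show "is_LND \<iota> (\<lambda>_. 0)"
    unfolding is_LND_def is_derivation_def by (auto intro: exI[of _ 1])
  show "extend_der (\<lambda>_. 0) [:r:] = 0"
    by (simp add: extend_der_def poly_eq_iff coeff_map_poly)
qed

lemma X_mult_LND_image_in_HD_star:
  fixes \<iota> :: "'k::field_char_0 \<Rightarrow> 'b::idom"
  assumes alg: "alg_map \<iota>" and lnd: "is_LND \<iota> \<delta>"
  shows "[:0, \<delta> b:] \<in> HD_star (\<lambda>c. [:\<iota> c:])"
proof -
  let ?\<sigma> = "\<lambda>c. [:\<iota> c:]"
  let ?HD = "HD_star ?\<sigma>"
  have der: "is_derivation \<iota> \<delta>"
    using lnd unfolding is_LND_def by blast
  obtain m where "(\<delta> ^^ m) b = 0"
    using lnd unfolding is_LND_def by blast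
  then have nil: "(\<delta> ^^ Suc (Suc m)) b = 0"
    using funpow_derivation_eq_0_mono[OF der, of m b "Suc (Suc m)"] by linarith
  define v where "v i = monom (\<iota> ((-1) ^ i / fact i) * (\<delta> ^^ i) b) i" for i
  have family: "(\<Sum>i\<le>Suc m. ?\<sigma> t ^ i * v i) \<in> ?HD" for t
  proof -
    let ?t\<delta> = "\<lambda>y. \<iota> t * \<delta> y"
    have t_lnd: "is_LND \<iota> ?t\<delta>"
      by (rule is_LND_scale[OF alg lnd])
    have "(?t\<delta> ^^ Suc (Suc m)) b = 0"
      unfolding funpow_scale_derivation[OF alg der] nil by simp
    then have "extend_der ?t\<delta> (exp_series \<iota> ?t\<delta> b (Suc m)) = 0"
      using extend_der_exp_series[OF alg] t_lnd unfolding is_LND_def by blast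
    then have "exp_series \<iota> ?t\<delta> b (Suc m) \<in> ?HD"
      by (rule extend_der_kernel_in_HD_star[OF t_lnd])
    moreover have "exp_series \<iota> ?t\<delta> b (Suc m) = (\<Sum>i\<le>Suc m. ?\<sigma> t ^ i * v i)"
      unfolding exp_series_def v_def funpow_scale_derivation[OF alg der]
      by (intro sum.cong refl)
        (simp add: alg_map_power[OF alg_map_const_poly[OF alg], symmetric]
          alg_map_power[OF alg] smult_monom mult.left_commute)
    ultimately show ?thesis
      by simp
  qed
  have "v 1 \<in> ?HD"
  proof (rule linear_coeff_mem[OF alg_map_const_poly[OF alg] _ _ _ family])
    show "x + y \<in> ?HD" if "x \<in> ?HD" and "y \<in> ?HD" for x y
      using that unfolding HD_star_def by (rule subalg.add)
    show "?\<sigma> c * x \<in> ?HD" if "x \<in> ?HD" for c x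
      using that unfolding HD_star_def by (intro subalg.mult subalg.scalar)
  qed simp
  then have "?\<sigma> (-1) * v 1 \<in> ?HD"
    unfolding HD_star_def by (intro subalg.mult subalg.scalar)
  then show ?thesis
    by (simp add: v_def alg_map_uminus[OF alg] alg_map_1[OF alg] monom_Suc monom_0)
qed

lemma ideal_gen_least:
  assumes "0 \<in> J" and "\<And>x y. x \<in> J \<Longrightarrow> y \<in> J \<Longrightarrow> x + y \<in> J"
    and "\<And>r t. t \<in> T \<Longrightarrow> r * t \<in> J"
  shows "ideal_gen T \<subseteq> J"
proof
  show "x \<in> J" if "x \<in> ideal_gen T" for x
    using that by induction (use assms in auto)
qed

lemma subalg_poly_eq_UNIV:
  fixes \<sigma> :: "'k \<Rightarrow> 'a::comm_ring_1 poly"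
  assumes const: "\<And>r. [:r:] \<in> subalg \<sigma> G" and X: "[:0, 1:] \<in> subalg \<sigma> G"
  shows "subalg \<sigma> G = UNIV"
proof -
  have "p \<in> subalg \<sigma> G" for p
  proof (induction p)
    case 0
    show ?case
      using const[of 0] by simp
  next
    case (pCons a p)
    have "[:a:] + [:0, 1:] * p \<in> subalg \<sigma> G"
      by (intro subalg.add subalg.mult const X pCons.IH)
    then show ?case
      by simp
  qed
  then show ?thesis
    by blast
qed

lemma LND_image_ideal_X_mult_in_HD_star:
  fixes \<iota> :: "'k::field_char_0 \<Rightarrow> 'b::idom"
  assumes alg: "alg_map \<iota>" and "y \<in> LND_image_ideal \<iota>"
  shows "[:0, y:] \<in> HD_star (\<lambda>c. [:\<iota> c:])"
proof -
  let ?J = "{y. [:0, y:] \<in> HD_star (\<lambda>c. [:\<iota> c:])}"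
  have "ideal_gen (\<Union>{range D |D. is_LND \<iota> D}) \<subseteq> ?J"
  proof (rule ideal_gen_least)
    show "0 \<in> ?J"
      using const_poly_in_HD_star[of 0] by simp
    show "x + y \<in> ?J" if "x \<in> ?J" and "y \<in> ?J" for x y
      using subalg.add[OF that[simplified, unfolded HD_star_def]] by (simp add: HD_star_def)
    show "r * t \<in> ?J" if t: "t \<in> \<Union>{range D |D. is_LND \<iota> D}" for r t
    proof -
      obtain \<delta> b where "is_LND \<iota> \<delta>" and "t = \<delta> b"
        using t by blast
      then have "[:r:] * [:0, t:] \<in> HD_star (\<lambda>c. [:\<iota> c:])"
        using X_mult_LND_image_in_HD_star[OF alg] const_poly_in_HD_star subalg.mult
        unfolding HD_star_def by blast
      then show ?thesis
        by (simp add: mult.commute)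
    qed
  qed
  then show ?thesis
    using assms(2) unfolding LND_image_ideal_def by blast
qed

theorem proposition1:
  fixes \<iota> :: "'k::field_char_0 \<Rightarrow> 'b::idom"
  assumes "alg_closed TYPE('k)"
    and "alg_map \<iota>"
    and "finitely_generated_alg \<iota>"
    and "LND_image_ideal \<iota> = UNIV"
  shows "HD_star (\<lambda>c. [:\<iota> c:]) = (UNIV :: 'b poly set)"
proof -
  have "[:0, 1:] \<in> HD_star (\<lambda>c. [:\<iota> c:])"
    using LND_image_ideal_X_mult_in_HD_star[OF assms(2)] assms(4) by blast
  then show ?thesis
    using const_poly_in_HD_star unfolding HD_star_def by (intro subalg_poly_eq_UNIV)
qed

end
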